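(* Let $((x_n,y_n))_{n\in\mathbb N}$ be a sequence in $[0,\infty)^2$ such that $\sum_n(x_n,y_n)$ converges, and let $k\in\mathbb N$. Write $E:=E(x_n,y_n)$. (a) Let $A:=\{n:\ x_n<x_k\}$. If $x_k>\sum_{n\in A}x_n$, then $(\sum_{n\in A}x_n,\,x_k)$ is an $x$-gap of $E$. (b) Let $A:=\{n:\ y_n<y_k\}$. If $y_k>\sum_{n\in A}y_n$, then $(\sum_{n\in A}y_n,\,y_k)$ is a $y$-gap of $E$. (c) Assume that $A:=\{n:\ x_n<x_k\}=\{n:\ y_n<y_k\}$. If $x_k>\sum_{n\in A}x_n$ and $y_k>\sum_{n\in A}y_n$, then $(\sum_{n\in A}x_n,\,x_k)\times(\sum_{n\in A}y_n,\,y_k)$ is a rectangular gap of $E$.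
   Context: $E(x_n,y_n):=\{\sum_{n\in B}(x_n,y_n):\ B\subset\mathbb N\}$ is the achievement set of the series. For $A\subset\mathbb R^2$ and reals $a<b$, $c<d$: the set $(a,b)\times(c,d)$ is a rectangular gap of $A$ if $([a,b]\times[c,d])\cap A=\{(a,c),(b,d)\}$; the interval $(a,b)$ is an $x$-gap of $A$ if there exist $c,d\in\mathbb R$ with $(a,c),(b,d)\in A$ and $((a,b)\times\mathbb R)\cap A=\emptyset$; the interval $(c,d)$ is a $y$-gap of $A$ if there exist $a,b\in\mathbb R$ with $(a,c),(b,d)\in A$ and $(\mathbb R\times(c,d))\cap A=\emptyset$. *)

theory Defs
  imports Complex_Main
begin

definition subsum :: "(nat \<Rightarrow> real) \<Rightarrow> nat set \<Rightarrow> real" where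
  "subsum f B = (\<Sum>n. if n \<in> B then f n else 0)"

definition achievement_set :: "(nat \<Rightarrow> real) \<Rightarrow> (nat \<Rightarrow> real) \<Rightarrow> (real \<times> real) set" where
  "achievement_set x y = {(subsum x B, subsum y B) | B. B \<subseteq> (UNIV :: nat set)}"

definition rect_gap :: "(real \<times> real) set \<Rightarrow> real \<Rightarrow> real \<Rightarrow> real \<Rightarrow> real \<Rightarrow> bool" where
  "rect_gap A a b c d \<longleftrightarrow> a < b \<and> c < d \<and>
     ({a..b} \<times> {c..d}) \<inter> A = {(a, c), (b, d)}"

definition x_gap :: "(real \<times> real) set \<Rightarrow> real \<Rightarrow> real \<Rightarrow> bool" where
  "x_gap A a b \<longleftrightarrow> a < b \<and> (\<exists>c d. (a, c) \<in> A \<and> (b, d) \<in> A) \<and>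
     ({a<..<b} \<times> UNIV) \<inter> A = {}"

definition y_gap :: "(real \<times> real) set \<Rightarrow> real \<Rightarrow> real \<Rightarrow> bool" where
  "y_gap A c d \<longleftrightarrow> c < d \<and> (\<exists>a b. (a, c) \<in> A \<and> (b, d) \<in> A) \<and>
     (UNIV \<times> {c<..<d}) \<inter> A = {}"

end

theory Submission
  imports Defs
begin

text \<open>For every \<open>B \<subseteq> \<nat>\<close>, either \<open>B \<subseteq> A\<close>, so that by monotonicity \<open>\<Sum>\<^sub>B x\<^sub>n \<le> \<Sum>\<^sub>A x\<^sub>n\<close>,
  or \<open>B\<close> contains some \<open>m\<close> with \<open>x\<^sub>m \<ge> x\<^sub>k\<close>, so that \<open>\<Sum>\<^sub>B x\<^sub>n \<ge> x\<^sub>k\<close> by nonnegativity.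
  Hence no point of \<open>E\<close> has first coordinate strictly between \<open>\<Sum>\<^sub>A x\<^sub>n\<close> and \<open>x\<^sub>k\<close>,
  while both endpoints are attained (by \<open>A\<close> and by \<open>{k}\<close>). In (c) the set \<open>A\<close> is the same
  for both coordinates, so the same alternative holds for both, which pins every point of
  the closed rectangle in \<open>E\<close> to one of its two corners.\<close>

lemma summable_restrict:
  fixes f :: "nat \<Rightarrow> real"
  assumes "\<And>n. f n \<ge> 0" "summable f"
  shows "summable (\<lambda>n. if n \<in> B then f n else 0)"
  by (rule summable_comparison_test[OF _ assms(2)]) (auto simp: assms(1))

lemma subsum_mono:
  fixes f :: "nat \<Rightarrow> real"
  assumes "\<And>n. f n \<ge> 0" "summable f" "B \<subseteq> C"
  shows "subsum f B \<le> subsum f C"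
  unfolding subsum_def
  by (rule suminf_le) (use assms summable_restrict[OF assms(1,2)] in auto)

lemma subsum_singleton: "subsum f {m} = f m"
proof -
  have "(\<lambda>n. if n \<in> {m} then f n else 0) = (\<lambda>n. if n = m then f n else 0)" by auto
  then show ?thesis unfolding subsum_def using sums_single[of m f] sums_unique by metis
qed

lemma subsum_ge_threshold:
  fixes f :: "nat \<Rightarrow> real"
  assumes "\<And>n. f n \<ge> 0" "summable f" "\<not> B \<subseteq> {n. f n < t}"
  shows "t \<le> subsum f B"
proof -
  obtain m where "m \<in> B" "t \<le> f m" using assms(3) by (auto simp: subset_iff not_less)
  moreover have "f m \<le> subsum f B"
    using subsum_mono[OF assms(1,2), of "{m}" B] \<open>m \<in> B\<close> by (simp add: subsum_singleton)
  ultimately show ?thesis by linarith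
qed

lemma subsum_not_between:
  fixes f :: "nat \<Rightarrow> real"
  assumes "\<And>n. f n \<ge> 0" "summable f"
  shows "subsum f B \<le> subsum f {n. f n < t} \<or> t \<le> subsum f B"
  using subsum_mono[OF assms] subsum_ge_threshold[OF assms] by blast

lemma achievement_set_iff: "p \<in> achievement_set x y \<longleftrightarrow> (\<exists>B. p = (subsum x B, subsum y B))"
  unfolding achievement_set_def by blast

lemma subsum_in_achievement_set: "(subsum x B, subsum y B) \<in> achievement_set x y"
  by (auto simp: achievement_set_iff)

lemma term_in_achievement_set: "(x k, y k) \<in> achievement_set x y"
  using subsum_in_achievement_set[where B = "{k}"] by (simp add: subsum_singleton)

lemma achievement_set_swap: "prod.swap ` achievement_set x y = achievement_set y x"
  by (force simp: achievement_set_iff)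

lemma y_gap_iff_x_gap_swap: "y_gap A c d \<longleftrightarrow> x_gap (prod.swap ` A) c d"
  unfolding x_gap_def y_gap_def by (auto simp: disjoint_iff)

lemma x_gap_achievement_set:
  fixes x y :: "nat \<Rightarrow> real"
  assumes "\<And>n. x n \<ge> 0" "summable x"
    and "subsum x {n. x n < x k} < x k"
  shows "x_gap (achievement_set x y) (subsum x {n. x n < x k}) (x k)"
  unfolding x_gap_def
proof (intro conjI)
  show "\<exists>c d. (subsum x {n. x n < x k}, c) \<in> achievement_set x y \<and> (x k, d) \<in> achievement_set x y"
    using subsum_in_achievement_set term_in_achievement_set by blast
  show "({subsum x {n. x n < x k}<..<x k} \<times> UNIV) \<inter> achievement_set x y = {}"
  proof (intro equals0I)
    fix p
    assume "p \<in> ({subsum x {n. x n < x k}<..<x k} \<times> UNIV) \<inter> achievement_set x y"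
    then obtain B where "p = (subsum x B, subsum y B)" "subsum x B \<in> {subsum x {n. x n < x k}<..<x k}"
      by (auto simp: achievement_set_iff)
    then show False using subsum_not_between[OF assms(1,2), of B "x k"] by auto
  qed
qed (fact assms(3))

lemma y_gap_achievement_set:
  fixes x y :: "nat \<Rightarrow> real"
  assumes "\<And>n. y n \<ge> 0" "summable y"
    and "subsum y {n. y n < y k} < y k"
  shows "y_gap (achievement_set x y) (subsum y {n. y n < y k}) (y k)"
  using x_gap_achievement_set[OF assms, of x]
  by (simp add: y_gap_iff_x_gap_swap achievement_set_swap)

lemma rect_gap_achievement_set:
  fixes x y :: "nat \<Rightarrow> real"
  assumes x: "\<And>n. x n \<ge> 0" "summable x"
    and y: "\<And>n. y n \<ge> 0" "summable y"
    and A: "A = {n. x n < x k}" "A = {n. y n < y k}"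
    and gaps: "subsum x A < x k" "subsum y A < y k"
  shows "rect_gap (achievement_set x y) (subsum x A) (x k) (subsum y A) (y k)"
  unfolding rect_gap_def
proof (intro conjI equalityI subsetI)
  fix p
  assume p: "p \<in> ({subsum x A..x k} \<times> {subsum y A..y k}) \<inter> achievement_set x y"
  then obtain B where B: "p = (subsum x B, subsum y B)" by (auto simp: achievement_set_iff)
  show "p \<in> {(subsum x A, subsum y A), (x k, y k)}"
  proof (cases "B \<subseteq> A")
    case True
    then have "subsum x B \<le> subsum x A" "subsum y B \<le> subsum y A"
      using subsum_mono x y by blast+
    then show ?thesis using p B by auto
  next
    case False
    then have "x k \<le> subsum x B" "y k \<le> subsum y B"
      using subsum_ge_threshold x y A by blast+
    then show ?thesis using p B by auto
  qed
next
  fix p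
  assume "p \<in> {(subsum x A, subsum y A), (x k, y k)}"
  then show "p \<in> ({subsum x A..x k} \<times> {subsum y A..y k}) \<inter> achievement_set x y"
    using subsum_in_achievement_set term_in_achievement_set gaps by auto
qed (fact gaps)+

theorem mainTheorem16:
  fixes x y :: "nat \<Rightarrow> real" and k :: nat
  assumes nonneg_x: "\<And>n. x n \<ge> 0"
      and nonneg_y: "\<And>n. y n \<ge> 0"
      and conv_x: "summable x"
      and conv_y: "summable y"
  shows "(x k > subsum x {n. x n < x k} \<longrightarrow>
            x_gap (achievement_set x y) (subsum x {n. x n < x k}) (x k))
       \<and> (y k > subsum y {n. y n < y k} \<longrightarrow>
            y_gap (achievement_set x y) (subsum y {n. y n < y k}) (y k))
       \<and> ({n. x n < x k} = {n. y n < y k} \<longrightarrow>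
            x k > subsum x {n. x n < x k} \<longrightarrow> y k > subsum y {n. x n < x k} \<longrightarrow>
            rect_gap (achievement_set x y) (subsum x {n. x n < x k}) (x k)
                     (subsum y {n. x n < x k}) (y k))"
  using x_gap_achievement_set[OF nonneg_x conv_x]
    y_gap_achievement_set[OF nonneg_y conv_y]
    rect_gap_achievement_set[OF nonneg_x conv_x nonneg_y conv_y refl]
  by blast

end
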